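(* Let $r,s$ be real numbers with $s\ge 1$ and $r\le s-1$, and let $G$ be a finite group. Then $T_G(r,s)\le 0$, with equality if and only if $G$ is cyclic.
   Context: $o(x)$ is the order of $x$, $\varphi$ is Euler's totient function, and $C_N$ is the cyclic group of order $N$. For a finite group $G$ and reals $r,s$, $R_G(r,s) := \sum_{x\in G} \frac{o(x)^s}{\varphi(o(x))^r}$ and $T_G(r,s) := R_G(r,s) - R_{C_{|G|}}(r,s)$. *)

theory Defs
  imports "HOL-Algebra.Elementary_Groups" "HOL-Algebra.Multiplicative_Group" "HOL-Number_Theory.Number_Theory"
begin

definition R_sum :: "('a, 'b) monoid_scheme \<Rightarrow> real \<Rightarrow> real \<Rightarrow> real" where
  "R_sum G r s = (\<Sum>x\<in>carrier G. real (group.ord G x) powr s / real (totient (group.ord G x)) powr r)"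

definition T_diff :: "('a, 'b) monoid_scheme \<Rightarrow> real \<Rightarrow> real \<Rightarrow> real" where
  "T_diff G r s = R_sum G r s - R_sum (integer_mod_group (order G)) r s"

end

theory Submission
  imports Defs
begin

text \<open>Write \<open>w(d) = d\<^sup>s / \<phi>(d)\<^sup>r\<close>, so that \<open>R\<^sub>G = \<Sum>\<^sub>x w(o(x))\<close> and \<open>R(C\<^sub>n) = \<Sum>\<^sub>d\<^sub>|\<^sub>n \<phi>(d) w(d)\<close>.
  The hypotheses on \<open>r, s\<close> make \<open>w(d)/d\<close> increasing along divisibility. We induct on \<open>n = |G|\<close>
  and let \<open>q\<close> be the largest prime factor of \<open>n\<close>. If every element has order at most \<open>n/q\<close>, then
  \<open>R\<^sub>G \<le> n w(n)/q \<le> \<phi>(n) w(n) < R(C\<^sub>n)\<close>, since \<open>n/\<phi>(n) = \<Prod>\<^sub>p\<^sub>|\<^sub>n p/(p-1) \<le> q\<close>. Otherwise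
  an element of order \<open>> n/q\<close> contains the \<open>q\<close>-part \<open>N\<close> of \<open>n\<close>, and the \<open>N\<close>-torsion of \<open>G\<close> is a
  normal cyclic subgroup \<open>Q\<close> of order \<open>N\<close> with \<open>(N, [G:Q]) = 1\<close>. Summing over cosets gives
  \<open>R\<^sub>G \<le> R(C\<^sub>N) R\<^sub>G\<^sub>/\<^sub>Q\<close>, and equality forces a representative of a generating coset to commute
  with \<open>Q\<close>; the induction hypothesis for \<open>G/Q\<close> and multiplicativity of \<open>n \<mapsto> R(C\<^sub>n)\<close> finish
  the proof.\<close>

section \<open>Order weights\<close>

definition ord_weight :: "real \<Rightarrow> real \<Rightarrow> nat \<Rightarrow> real" where
  "ord_weight r s d = real d powr s / real (totient d) powr r"

definition R_cyclic :: "real \<Rightarrow> real \<Rightarrow> nat \<Rightarrow> real" where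
  "R_cyclic r s n = (\<Sum>d | d dvd n. real (totient d) * ord_weight r s d)"

lemma R_sum_eq_sum_ord_weight: "R_sum G r s = (\<Sum>x\<in>carrier G. ord_weight r s (group.ord G x))"
  unfolding R_sum_def ord_weight_def ..

lemma ord_weight_nonneg [simp]: "0 \<le> ord_weight r s d"
  unfolding ord_weight_def by simp

lemma ord_weight_pos: "d > 0 \<Longrightarrow> ord_weight r s d > 0"
  unfolding ord_weight_def by simp

lemma ord_weight_1 [simp]: "ord_weight r s (Suc 0) = 1"
  unfolding ord_weight_def by simp

lemma ord_weight_mult:
  assumes "coprime a b"
  shows "ord_weight r s (a * b) = ord_weight r s a * ord_weight r s b"
  using assms by (simp add: ord_weight_def totient_mult_coprime powr_mult)

lemma totient_ratio_le_of_dvd: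
  assumes "d dvd e" "e > 0"
  shows "real d * real (totient e) \<le> real e * real (totient d)"
proof -
  define f where "f = (\<lambda>p::nat. 1 - 1 / real p)"
  have f01: "0 \<le> f p \<and> f p \<le> 1" if "prime p" for p
    using that prime_ge_1_nat[of p] unfolding f_def by (simp add: field_simps)
  have sub: "prime_factors d \<subseteq> prime_factors e"
    using assms by (simp add: dvd_prime_factors dvd_pos_nat)
  have "prod f (prime_factors e) = prod f (prime_factors e - prime_factors d) * prod f (prime_factors d)"
    using sub by (simp add: prod.subset_diff)
  also have "\<dots> \<le> prod f (prime_factors d)"
    using f01 by (intro mult_left_le_one_le prod_nonneg prod_le_1) auto
  finally have "prod f (prime_factors e) \<le> prod f (prime_factors d)" .
  then have "real d * real e * prod f (prime_factors e) \<le> real d * real e * prod f (prime_factors d)"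
    by (rule mult_left_mono) simp
  then show ?thesis by (simp add: totient_formula2 f_def mult_ac)
qed

lemma powr_le_powr_minus_one:
  fixes t u r s :: real
  assumes "1 \<le> u" "u \<le> t" "1 \<le> s" "r \<le> s - 1"
  shows "u powr r \<le> t powr (s - 1)"
proof (cases "r \<ge> 0")
  case True
  have "u powr r \<le> t powr r" using assms True by (intro powr_mono2) auto
  also have "\<dots> \<le> t powr (s - 1)" using assms by (intro powr_mono) auto
  finally show ?thesis .
next
  case False
  have "u powr r \<le> 1"
    using assms False by (cases "u = 1") (auto intro: less_imp_le[OF powr_less_one])
  also have "1 \<le> t powr (s - 1)" using assms by (intro ge_one_powr_ge_zero) auto
  finally show ?thesis .
qed

text \<open>With \<open>t = e/d\<close> and \<open>u = \<phi>(e)/\<phi>(d)\<close> one has \<open>1 \<le> u \<le> t\<close>, and the claim reduces to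
  \<open>u\<^sup>r \<le> t\<^sup>s\<^sup>-\<^sup>1\<close>.\<close>
lemma ord_weight_div_mono:
  assumes "1 \<le> s" "r \<le> s - 1" "d dvd e" "e > 0"
  shows "real e * ord_weight r s d \<le> real d * ord_weight r s e"
proof -
  have "d > 0" using assms(3,4) by (auto intro: dvd_pos_nat)
  define t where "t = real e / real d"
  define u where "u = real (totient e) / real (totient d)"
  have e_eq: "real e = t * real d" and totient_e_eq: "real (totient e) = u * real (totient d)"
    using \<open>d > 0\<close> by (simp_all add: t_def u_def)
  have "1 \<le> u"
    using \<open>d > 0\<close> assms(4) totient_dvd_mono[OF assms(3)] by (simp add: u_def field_simps)
  moreover have "u \<le> t"
    using \<open>d > 0\<close> totient_ratio_le_of_dvd[OF assms(3,4)] by (simp add: u_def t_def field_simps)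
  ultimately have ratio: "u powr r \<le> t powr (s - 1)"
    using assms(1,2) by (rule powr_le_powr_minus_one)
  have "t > 0" "u > 0" using \<open>1 \<le> u\<close> \<open>u \<le> t\<close> by auto
  have "real d * ord_weight r s e
      = real e * (t powr (s - 1) / u powr r) * ord_weight r s d"
    using \<open>t > 0\<close> \<open>u > 0\<close>
    by (simp add: ord_weight_def e_eq totient_e_eq powr_mult powr_diff field_simps)
  also have "\<dots> \<ge> real e * 1 * ord_weight r s d"
    using ratio \<open>u > 0\<close> by (intro mult_right_mono mult_left_mono) auto
  finally show ?thesis by simp
qed

lemma ord_weight_dvd_mono:
  assumes "1 \<le> s" "r \<le> s - 1" "d dvd e" "e > 0"
  shows "ord_weight r s d \<le> ord_weight r s e"
proof -
  have "d > 0" using assms(3,4) by (auto intro: dvd_pos_nat)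
  have "real d * ord_weight r s d \<le> real e * ord_weight r s d"
    using assms(3,4) by (intro mult_right_mono) (auto dest: dvd_imp_le)
  also have "\<dots> \<le> real d * ord_weight r s e" by (rule ord_weight_div_mono[OF assms])
  finally show ?thesis using \<open>d > 0\<close> by simp
qed

lemma ord_weight_dvd_strict_mono:
  assumes "1 \<le> s" "r \<le> s - 1" "d dvd e" "e > 0" "d \<noteq> e"
  shows "ord_weight r s d < ord_weight r s e"
proof -
  have "d > 0" using assms(3,4) by (auto intro: dvd_pos_nat)
  obtain k where k: "e = d * k" using assms(3) by (rule dvdE)
  have "k \<ge> 2" using k assms(4,5) by (cases k; cases "k - 1") auto
  then have "2 * real d \<le> real e"
    using k mult_left_mono[of 2 "real k" "real d"] by (simp add: mult.commute)
  then have "2 * real d * ord_weight r s d \<le> real e * ord_weight r s d"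
    by (intro mult_right_mono) auto
  also have "\<dots> \<le> real d * ord_weight r s e" by (rule ord_weight_div_mono[OF assms(1-4)])
  finally have "2 * ord_weight r s d \<le> ord_weight r s e" using \<open>d > 0\<close> by simp
  then show ?thesis using ord_weight_pos[OF \<open>d > 0\<close>, of r s] by linarith
qed

lemma sum_ord_div_gcd_eq_sum_totient:
  fixes h :: "nat \<Rightarrow> real"
  assumes "N > 0"
  shows "(\<Sum>i<N. h (N div gcd N i)) = (\<Sum>d | d dvd N. real (totient d) * h d)"
proof -
  have "(\<Sum>i<N. h (N div gcd N i)) = (\<Sum>k\<in>{0<..N}. h (N div gcd k N))"
    using assms
    by (intro sum.reindex_bij_witness[of _ "\<lambda>k. k mod N" "\<lambda>i. if i = 0 then N else i"])
       (auto simp: gcd.commute le_less)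
  also have "\<dots> = (\<Sum>d | d dvd N. \<Sum>k\<in>{k\<in>{0<..N}. gcd k N = d}. h (N div gcd k N))"
    by (rule sum.group[symmetric]) (use assms in auto)
  also have "\<dots> = (\<Sum>d | d dvd N. real (card {k\<in>{0<..N}. gcd k N = d}) * h (N div d))"
    by (intro sum.cong refl) simp
  also have "\<dots> = (\<Sum>d | d dvd N. real (totient (N div d)) * h (N div d))"
    using card_gcd_eq_totient[OF assms] by (intro sum.cong refl) simp
  also have "\<dots> = (\<Sum>d | d dvd N. real (totient d) * h d)"
    using assms by (intro sum.reindex_bij_witness[of _ "(div) N" "(div) N"]) (auto elim: dvdE)
  finally show ?thesis .
qed

lemma bij_betw_divisors_mult:
  fixes a b :: nat
  assumes "coprime a b"
  shows "bij_betw (\<lambda>(x, y). x * y) ({d. d dvd a} \<times> {d. d dvd b}) {d. d dvd a * b}"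
proof (rule bij_betw_byWitness[where f' = "\<lambda>d. (gcd d a, gcd d b)"])
  have gcd_left: "gcd (x * y) a = x" if "coprime a b" "x dvd a" "y dvd b" for a b x y :: nat
    by (metis that coprime_mult_right_iff dvd_mult_div_cancel gcd_mult_left_right_cancel
        gcd_nat.order_iff)
  have "gcd (x * y) b = y" if "x dvd a" "y dvd b" for x y
    using gcd_left[of b a y x] assms that by (simp add: coprime_commute mult.commute)
  moreover have "gcd d a * gcd d b = d" if "d dvd a * b" for d
    by (smt (verit, del_insts) assms that coprime_mult_right_iff division_decomp
        dvd_mult_div_cancel gcd.commute gcd_mult_right_left_cancel gcd_mult_right_right_cancel
        gcd_nat.absorb_iff2 is_unit_gcd)
  ultimately show "\<forall>p\<in>{d. d dvd a} \<times> {d. d dvd b}. (\<lambda>d. (gcd d a, gcd d b)) ((\<lambda>(x, y). x * y) p) = p"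
    and "\<forall>d\<in>{d. d dvd a * b}. (\<lambda>(x, y). x * y) ((\<lambda>d. (gcd d a, gcd d b)) d) = d"
    and "(\<lambda>(x, y). x * y) ` ({d. d dvd a} \<times> {d. d dvd b}) \<subseteq> {d. d dvd a * b}"
    and "(\<lambda>d. (gcd d a, gcd d b)) ` {d. d dvd a * b} \<subseteq> {d. d dvd a} \<times> {d. d dvd b}"
    using gcd_left[OF assms] by (auto intro: mult_dvd_mono)
qed

lemma sum_divisors_mult_coprime:
  fixes g :: "nat \<Rightarrow> 'a :: comm_semiring_1"
  assumes "coprime a b" and g_mult: "\<And>x y. coprime x y \<Longrightarrow> g (x * y) = g x * g y"
  shows "(\<Sum>d | d dvd a * b. g d) = (\<Sum>d | d dvd a. g d) * (\<Sum>d | d dvd b. g d)"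
proof -
  have "(\<Sum>d | d dvd a * b. g d) = (\<Sum>(x, y)\<in>{d. d dvd a} \<times> {d. d dvd b}. g (x * y))"
    by (subst sum.reindex_bij_betw[OF bij_betw_divisors_mult[OF assms(1)], symmetric])
       (simp add: case_prod_unfold)
  also have "\<dots> = (\<Sum>(x, y)\<in>{d. d dvd a} \<times> {d. d dvd b}. g x * g y)"
    using assms(1) by (intro sum.cong refl) (auto intro: g_mult coprime_divisors)
  also have "\<dots> = (\<Sum>d | d dvd a. g d) * (\<Sum>d | d dvd b. g d)"
    by (simp add: sum_product sum.cartesian_product)
  finally show ?thesis .
qed

lemma R_cyclic_mult:
  assumes "coprime a b"
  shows "R_cyclic r s (a * b) = R_cyclic r s a * R_cyclic r s b"
  unfolding R_cyclic_def
  by (rule sum_divisors_mult_coprime[OF assms])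
     (simp add: totient_mult_coprime ord_weight_mult mult_ac)

lemma R_cyclic_ge_totient_ord_weight:
  assumes "n > 1"
  shows "1 + real (totient n) * ord_weight r s n \<le> R_cyclic r s n"
proof -
  have "(\<Sum>d\<in>{1, n}. real (totient d) * ord_weight r s d) \<le> R_cyclic r s n"
    unfolding R_cyclic_def using assms by (intro sum_mono2) auto
  then show ?thesis using assms by simp
qed

lemma R_cyclic_ge_1:
  assumes "n > 0"
  shows "1 \<le> R_cyclic r s n"
proof -
  have "(\<Sum>d\<in>{1}. real (totient d) * ord_weight r s d) \<le> R_cyclic r s n"
    unfolding R_cyclic_def using assms by (intro sum_mono2) auto
  then show ?thesis by simp
qed

lemma prod_one_minus_inverse_telescope: "q \<ge> 1 \<Longrightarrow> (\<Prod>k\<in>{2..q}. 1 - 1 / real k) = 1 / real q"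
proof (induction q rule: dec_induct)
  case (step q)
  have "{2..Suc q} = insert (Suc q) {2..q}" using step by auto
  then show ?case using step by (simp add: field_simps)
qed simp

lemma le_Max_prime_factor_mult_totient:
  assumes "n > 1"
  shows "real n \<le> real (Max (prime_factors n)) * real (totient n)"
proof -
  define q where "q = Max (prime_factors n)"
  define f where "f = (\<lambda>p::nat. 1 - 1 / real p)"
  have "prime_factors n \<noteq> {}" using assms by (simp add: prime_factorization_empty_iff)
  then have "q \<in> prime_factors n" unfolding q_def by (intro Max_in) auto
  then have "q \<ge> 2" using prime_ge_2_nat by auto
  have sub: "prime_factors n \<subseteq> {2..q}"
    using Max_ge[of "prime_factors n"] in_prime_factors_imp_prime prime_ge_2_nat
    by (fastforce simp: q_def)
  have "1 / real q = prod f ({2..q} - prime_factors n) * prod f (prime_factors n)"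
    using sub \<open>q \<ge> 2\<close> prod_one_minus_inverse_telescope[of q]
    by (simp add: prod.subset_diff f_def)
  also have "\<dots> \<le> prod f (prime_factors n)"
    using sub by (intro mult_left_le_one_le prod_nonneg prod_le_1) (auto simp: f_def field_simps)
  finally have "1 \<le> real q * prod f (prime_factors n)"
    using \<open>q \<ge> 2\<close> by (simp add: field_simps)
  then have "real n \<le> real q * (real n * prod f (prime_factors n))"
    using mult_left_mono[of 1 _ "real n"] by (simp add: mult.left_commute)
  then show ?thesis by (simp add: q_def totient_formula2 f_def)
qed

section \<open>Element orders and sums over cyclic groups\<close>

lemma (in group) pow_mod_ord:
  assumes "x \<in> carrier G"
  shows "x [^] (i mod ord x) = x [^] (i::nat)"
proof -
  have "x [^] i = x [^] (ord x * (i div ord x)) \<otimes> x [^] (i mod ord x)"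
    using assms by (simp add: nat_pow_mult)
  also have "x [^] (ord x * (i div ord x)) = \<one>"
    using assms by (simp add: pow_eq_id)
  finally show ?thesis using assms by simp
qed

lemma (in group) ord_pow_dvd_ord:
  assumes "x \<in> carrier G"
  shows "ord (x [^] (k::nat)) dvd ord x"
proof -
  have "(x [^] k) [^] ord x = \<one>"
    using assms by (metis mult.commute nat_pow_one nat_pow_pow pow_ord_eq_1)
  then show ?thesis using assms by (simp add: pow_eq_id)
qed

lemma (in group) ord_weight_ord_pow_le:
  assumes "1 \<le> s" "r \<le> s - 1" "finite (carrier G)" "g \<in> carrier G"
  shows "ord_weight r s (ord (g [^] (k::nat))) \<le> ord_weight r s (ord g)"
  using assms ord_ge_1[OF assms(3,4)] by (intro ord_weight_dvd_mono ord_pow_dvd_ord) auto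

lemma (in group) inj_on_pow_lessThan_ord:
  assumes "finite (carrier G)" "x \<in> carrier G"
  shows "inj_on (\<lambda>i. x [^] i) {..<ord x}"
proof -
  have "{..<ord x} = {0..ord x - 1}" using ord_ge_1[OF assms] by auto
  then show ?thesis using ord_inj[OF assms(2)] by simp
qed

lemma (in group) pow_eq_pow_iff_mod_ord:
  assumes "finite (carrier G)" "x \<in> carrier G"
  shows "x [^] i = x [^] j \<longleftrightarrow> i mod ord x = (j::nat) mod ord x"
proof -
  have "i mod ord x \<in> {..<ord x}" "j mod ord x \<in> {..<ord x}"
    using ord_ge_1[OF assms] by auto
  then show ?thesis
    using inj_on_pow_lessThan_ord[OF assms] pow_mod_ord[OF assms(2)]
    by (metis inj_on_eq_iff)
qed

lemma (in group) ord_mult_of_commuting_coprime: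
  assumes x: "x \<in> carrier G" and y: "y \<in> carrier G" and comm: "x \<otimes> y = y \<otimes> x"
    and coprime: "coprime (ord x) (ord y)"
  shows "ord (x \<otimes> y) = ord x * ord y"
proof (rule dvd_antisym)
  define k where "k = ord (x \<otimes> y)"
  have "(x \<otimes> y) [^] (k * n) = \<one>" for n :: nat
    using x y by (metis k_def m_closed nat_pow_one nat_pow_pow pow_ord_eq_1)
  then have xy_pow: "x [^] (k * n) \<otimes> y [^] (k * n) = \<one>" for n :: nat
    using pow_mult_distrib[OF comm x y] by simp
  have "y [^] (k * ord y) = \<one>" using y by (simp add: pow_eq_id)
  then have "x [^] (k * ord y) = \<one>" using xy_pow[of "ord y"] x by simp
  then have "ord x dvd k" using x coprime by (simp add: pow_eq_id coprime_dvd_mult_left_iff)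
  moreover have "x [^] (k * ord x) = \<one>" using x by (simp add: pow_eq_id)
  then have "y [^] (k * ord x) = \<one>" using xy_pow[of "ord x"] y by simp
  then have "ord y dvd k"
    using y coprime by (simp add: pow_eq_id coprime_dvd_mult_left_iff coprime_commute)
  ultimately show "ord x * ord y dvd k" using coprime by (simp add: divides_mult)
  show "k dvd ord x * ord y" unfolding k_def by (rule ord_mul_divides[OF comm x y])
qed

lemma (in group) carrier_eq_powers_if_ord_eq_order:
  assumes fin: "finite (carrier G)" and x: "x \<in> carrier G" and ord_x: "ord x = order G"
  shows "carrier G = (\<lambda>i. x [^] i) ` {..<order G}"
proof (rule card_subset_eq[OF fin, symmetric])
  show "(\<lambda>i. x [^] i) ` {..<order G} \<subseteq> carrier G" using x by auto
  show "card ((\<lambda>i. x [^] i) ` {..<order G}) = card (carrier G)"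
    using inj_on_pow_lessThan_ord[OF fin x] ord_x by (simp add: card_image order_def)
qed

lemma (in group) cyclic_group_if_ord_eq_order:
  assumes fin: "finite (carrier G)" and x: "x \<in> carrier G" and ord_x: "ord x = order G"
  shows "cyclic_group G"
proof -
  have "carrier G \<subseteq> range (\<lambda>n::int. x [^] n)"
    using carrier_eq_powers_if_ord_eq_order[OF assms] by (auto simp: int_pow_int[symmetric])
  then have "carrier G = range (\<lambda>n::int. x [^] n)" using x by auto
  then show ?thesis using cyclic_group x by blast
qed

lemma (in group) R_sum_if_ord_eq_order:
  assumes fin: "finite (carrier G)" and x: "x \<in> carrier G" and ord_x: "ord x = order G"
  shows "R_sum G r s = R_cyclic r s (order G)"
proof -
  define N where "N = order G"
  have "N > 0" using fin x by (auto simp: N_def order_def card_gt_0_iff)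
  have "R_sum G r s = (\<Sum>i<N. ord_weight r s (ord (x [^] i)))"
    using carrier_eq_powers_if_ord_eq_order[OF assms] inj_on_pow_lessThan_ord[OF fin x] ord_x
    by (simp add: R_sum_eq_sum_ord_weight sum.reindex N_def)
  also have "\<dots> = (\<Sum>i<N. ord_weight r s (N div gcd N i))"
    using ord_x \<open>N > 0\<close> x by (intro sum.cong refl) (simp add: ord_pow_gen N_def)
  also have "\<dots> = R_cyclic r s N"
    unfolding R_cyclic_def by (rule sum_ord_div_gcd_eq_sum_totient[OF \<open>N > 0\<close>])
  finally show ?thesis by (simp add: N_def)
qed

lemma (in group) R_sum_cyclic:
  assumes "finite (carrier G)" "cyclic_group G"
  shows "R_sum G r s = R_cyclic r s (order G)"
proof -
  obtain x where x: "x \<in> carrier G" and "subgroup_generated G {x} = G"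
    using assms(2) unfolding cyclic_group_def by blast
  then have "ord x = order G" using cyclic_order_is_ord[OF x] by simp
  then show ?thesis using R_sum_if_ord_eq_order[OF assms(1) x] by simp
qed

lemma R_sum_integer_mod_group:
  assumes "n > 0"
  shows "R_sum (integer_mod_group n) r s = R_cyclic r s n"
proof -
  interpret Z: group "integer_mod_group n" by simp
  have carrier: "carrier (integer_mod_group n) = {0..<int n}"
    using assms by (simp add: carrier_integer_mod_group)
  define x where "x = 1 mod int n"
  have x: "x \<in> carrier (integer_mod_group n)" using carrier assms by (simp add: x_def)
  have "x [^]\<^bsub>integer_mod_group n\<^esub> k = \<one>\<^bsub>integer_mod_group n\<^esub> \<longleftrightarrow> n dvd k" for k :: nat
  proof -
    have "x [^]\<^bsub>integer_mod_group n\<^esub> k = int k mod int n"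
      unfolding x_def pow_integer_mod_group by (metis mod_mult_right_eq mult.right_neutral)
    then show ?thesis
      by (simp add: one_integer_mod_group) (metis dvd_eq_mod_eq_0 of_nat_eq_0_iff of_nat_mod)
  qed
  then have "Z.ord x = n" using Z.ord_unique[OF x] by simp
  then show ?thesis using Z.R_sum_if_ord_eq_order[OF _ x] carrier by (simp add: order_def)
qed

lemma iso_ord_eq:
  assumes G: "group G" and H: "group H" and h: "h \<in> iso G H" and x: "x \<in> carrier G"
  shows "group.ord H (h x) = group.ord G x"
proof -
  interpret G: group G by fact
  interpret H: group H by fact
  interpret group_hom G H h
    using G H h by (simp add: group_hom_def group_hom_axioms_def iso_imp_homomorphism)
  have inj: "inj_on h (carrier G)" using h by (simp add: iso_def bij_betw_def)
  have "h x [^]\<^bsub>H\<^esub> n = \<one>\<^bsub>H\<^esub> \<longleftrightarrow> G.ord x dvd n" for n :: nat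
    using inj_on_eq_iff[OF inj, of "x [^]\<^bsub>G\<^esub> n" "\<one>\<^bsub>G\<^esub>"] x G.pow_eq_id[OF x]
    by (simp add: hom_nat_pow)
  then show ?thesis using H.ord_unique[of "h x"] x by simp
qed

lemma is_iso_invariants:
  assumes G: "group G" and H: "group H" and iso: "G \<cong> H"
  shows "R_sum H r s = R_sum G r s" and "order H = order G"
    and "finite (carrier H) \<longleftrightarrow> finite (carrier G)" and "cyclic_group H \<longleftrightarrow> cyclic_group G"
proof -
  obtain h where h: "h \<in> iso G H" using iso by (auto simp: is_iso_def)
  then have bij: "bij_betw h (carrier G) (carrier H)" by (simp add: iso_def)
  show "R_sum H r s = R_sum G r s"
    unfolding R_sum_eq_sum_ord_weight sum.reindex_bij_betw[OF bij, symmetric]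
    using iso_ord_eq[OF G H h] by simp
  show "order H = order G" using iso_same_card[OF iso] by (simp add: order_def)
  show "finite (carrier H) \<longleftrightarrow> finite (carrier G)" using iso_finite[OF iso] by simp
  show "cyclic_group H \<longleftrightarrow> cyclic_group G" using isomorphic_group_cyclicity[OF iso G H] by simp
qed

section \<open>Torsion inside a large cyclic subgroup\<close>

lemma (in group) mult_card_le_order_if_powers_outside:
  assumes fin: "finite (carrier G)" and H: "subgroup H G" and g: "g \<in> carrier G"
    and outside: "\<And>d. 0 < d \<Longrightarrow> d < q \<Longrightarrow> g [^] d \<notin> H"
  shows "q * card H \<le> order G"
proof -
  have "inj_on (\<lambda>i. H #> g [^] i) {..<q}"
  proof (rule linorder_inj_onI')
    fix i j assume "i < j" "j \<in> {..<q}"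
    have "g [^] j = g [^] (j - i) \<otimes> g [^] i" using g \<open>i < j\<close> by (simp add: nat_pow_mult)
    then have "g [^] j \<otimes> inv (g [^] i) = g [^] (j - i)" using g by (simp add: m_assoc)
    moreover have "g [^] (j - i) \<notin> H" using \<open>i < j\<close> \<open>j \<in> {..<q}\<close> by (intro outside) auto
    ultimately have "g [^] j \<notin> H #> g [^] i"
      using subgroup.rcos_module[OF H is_group, of "g [^] i" "g [^] j"] g by simp
    then show "H #> g [^] i \<noteq> H #> g [^] j" using rcos_self[OF _ H] g by force
  qed
  moreover have "(\<lambda>i. H #> g [^] i) ` {..<q} \<subseteq> rcosets H"
    using g subgroup.subset[OF H] by (auto intro: rcosetsI)
  moreover have "finite (rcosets H)"
    using rcosets_subset_PowG[OF H] fin by (meson finite_Pow_iff finite_subset)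
  ultimately have "q \<le> card (rcosets H)" using card_inj_on_le by fastforce
  then have "q * card H \<le> card (rcosets H) * card H" by simp
  also have "\<dots> = order G" by (rule lagrange[OF H])
  finally show ?thesis .
qed

lemma (in group) mem_subgroup_if_coprime_pow_mem:
  assumes H: "subgroup H G" and g: "g \<in> carrier G"
    and coprime: "coprime d (ord g)" and gd: "g [^] d \<in> H"
  shows "g \<in> H"
proof -
  obtain e where "[d * e = 1] (mod ord g)" using cong_solve_coprime_nat[OF coprime] by auto
  then have "g = g [^] (d * e)"
    using pow_mod_ord[OF g, of "d * e"] pow_mod_ord[OF g, of 1] g by (simp add: cong_def)
  also have "\<dots> = (g [^] d) [^] e" using g by (simp add: nat_pow_pow)
  finally show ?thesis using subgroup_int_pow_closed[OF H gd, of "int e"] by (simp add: int_pow_int)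
qed

text \<open>If some element has order exceeding \<open>|G|/q\<close>, its cyclic subgroup has index less than \<open>q\<close>;
  a \<open>q\<close>-element outside it would have its first \<open>q - 1\<close> powers outside as well, giving index
  at least \<open>q\<close>.\<close>
lemma (in group) prime_power_torsion_in_powers:
  assumes fin: "finite (carrier G)" and q: "prime q" and x: "x \<in> carrier G"
    and large: "order G < q * ord x"
    and g: "g \<in> carrier G" and g_pow: "g [^] (q ^ a) = \<one>"
  shows "g \<in> range (\<lambda>l::nat. x [^] l)"
proof -
  define H where "H = generate G {x}"
  have H: "subgroup H G" using x by (simp add: H_def generate_is_subgroup)
  have H_eq: "H = range (\<lambda>l::nat. x [^] l)"
    using generate_pow_on_finite_carrier[OF fin x] by (auto simp: H_def)
  have "g \<in> H"
  proof (rule ccontr)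
    assume "g \<notin> H"
    have "g [^] d \<notin> H" if "0 < d" "d < q" for d
    proof
      have "ord g dvd q ^ a" using g g_pow by (simp add: pow_eq_id)
      moreover have "\<not> q dvd d" using that by (auto dest: dvd_imp_le)
      then have "coprime d q" using prime_imp_coprime[OF q] coprime_commute by blast
      ultimately have "coprime d (ord g)" by (meson coprime_divisors coprime_power_right_iff dvd_refl)
      moreover assume "g [^] d \<in> H"
      ultimately show False using mem_subgroup_if_coprime_pow_mem[OF H g] \<open>g \<notin> H\<close> by blast
    qed
    then have "q * card H \<le> order G" by (rule mult_card_le_order_if_powers_outside[OF fin H g])
    then show False using large generate_pow_card[OF x] by (simp add: H_def)
  qed
  then show ?thesis using H_eq by simp
qed

lemma (in group) torsion_eq_powers_of_root:
  assumes fin: "finite (carrier G)" and x: "x \<in> carrier G" and N_dvd: "N dvd ord x" and "N > 0"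
    and torsion_in_powers: "\<And>g. g \<in> carrier G \<Longrightarrow> g [^] N = \<one> \<Longrightarrow> g \<in> range (\<lambda>l::nat. x [^] l)"
  defines "y \<equiv> x [^] (ord x div N)"
  shows "ord y = N" and "{g \<in> carrier G. g [^] N = \<one>} = (\<lambda>i. y [^] i) ` {..<N}"
proof -
  define k where "k = ord x div N"
  have y_eq: "y = x [^] k" by (simp add: y_def k_def)
  have ord_x: "ord x = N * k" using N_dvd by (simp add: k_def)
  have "k \<noteq> 0" using ord_x ord_ge_1[OF fin x] by auto
  have "ord y = ord x div k" using ord_pow[OF x _ \<open>k \<noteq> 0\<close>] ord_x y_eq by simp
  then show ord_y: "ord y = N" using ord_x \<open>k \<noteq> 0\<close> by simp
  have y: "y \<in> carrier G" using x by (simp add: y_eq)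
  show "{g \<in> carrier G. g [^] N = \<one>} = (\<lambda>i. y [^] i) ` {..<N}"
  proof (intro equalityI subsetI)
    fix g assume "g \<in> {g \<in> carrier G. g [^] N = \<one>}"
    then have g: "g \<in> carrier G" "g [^] N = \<one>" by auto
    obtain l :: nat where l: "g = x [^] l" using torsion_in_powers[OF g] by blast
    then have "x [^] (l * N) = \<one>" using g x by (simp add: nat_pow_pow)
    then have "k dvd l" using x ord_x \<open>N > 0\<close> by (simp add: pow_eq_id mult.commute)
    then obtain i where "l = k * i" by (rule dvdE)
    then have "g = y [^] i" using l x by (simp add: y_eq nat_pow_pow)
    also have "\<dots> = y [^] (i mod N)" using pow_mod_ord[OF y, of i] ord_y by simp
    finally have "g = y [^] (i mod N)" .
    then show "g \<in> (\<lambda>i. y [^] i) ` {..<N}" using \<open>N > 0\<close> by auto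
  next
    fix g assume "g \<in> (\<lambda>i. y [^] i) ` {..<N}"
    then obtain i :: nat where "g = y [^] i" by auto
    then show "g \<in> {g \<in> carrier G. g [^] N = \<one>}"
      using y ord_y by (simp add: nat_pow_pow) (metis mult.commute nat_pow_one nat_pow_pow pow_ord_eq_1)
  qed
qed

lemma (in group) conj_nat_pow:
  assumes z: "z \<in> carrier G" and h: "h \<in> carrier G"
  shows "(z \<otimes> h \<otimes> inv z) [^] (n::nat) = z \<otimes> h [^] n \<otimes> inv z"
proof (induction n)
  case (Suc n)
  have cancel: "inv z \<otimes> (z \<otimes> w) = w" if "w \<in> carrier G" for w
    using z that by (simp flip: m_assoc)
  have "(z \<otimes> h \<otimes> inv z) [^] Suc n = z \<otimes> (h [^] n \<otimes> h) \<otimes> inv z"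
    using Suc z h by (simp add: m_assoc cancel)
  then show ?case by simp
qed (use z in simp)

lemma (in group) normal_torsion_if_powers:
  assumes y: "y \<in> carrier G" and ord_y: "ord y = N" and "N > 0"
    and torsion_eq: "{g \<in> carrier G. g [^] N = \<one>} = (\<lambda>i. y [^] i) ` {..<N}"
  shows "{g \<in> carrier G. g [^] N = \<one>} \<lhd> G"
  unfolding normal_inv_iff
proof (intro conjI ballI)
  let ?T = "{g \<in> carrier G. g [^] N = \<one>}"
  show "subgroup ?T G"
  proof (rule subgroupI)
    show "?T \<noteq> {}" using \<open>N > 0\<close> torsion_eq by auto
    show "a \<otimes> b \<in> ?T" if ab: "a \<in> ?T" "b \<in> ?T" for a b
    proof -
      obtain i j :: nat where "a = y [^] i" "b = y [^] j" using ab unfolding torsion_eq by auto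
      then have "a \<otimes> b = y [^] ((i + j) mod N)" using y ord_y pow_mod_ord[OF y, of "i + j"] by (simp add: nat_pow_mult)
      then show ?thesis using torsion_eq \<open>N > 0\<close> by auto
    qed
  qed (auto simp: nat_pow_inv)
  show "z \<otimes> h \<otimes> inv z \<in> ?T" if "z \<in> carrier G" "h \<in> ?T" for z h
    using that by (simp add: conj_nat_pow)
qed

section \<open>Groups with a normal cyclic subgroup of coprime index\<close>

locale cyclic_normal_coprime = group G for G :: "('a, 'b) monoid_scheme" (structure) +
  fixes Q :: "'a set" and y :: 'a and N :: nat
  assumes finite_carrier: "finite (carrier G)" and normal_Q: "Q \<lhd> G" and y: "y \<in> carrier G"
    and ord_y: "ord y = N" and Q_eq: "Q = (\<lambda>i. y [^] i) ` {..<N}"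
    and coprime_index: "coprime N (order (G Mod Q))" and N_ge_2: "N \<ge> 2"
begin

lemma quotient_group: "group (G Mod Q)"
  using normal_Q by (rule normal.factorgroup_is_group)

lemma subgroup_Q: "subgroup Q G"
  using normal_Q by (rule normal_imp_subgroup)

lemma Q_subset: "Q \<subseteq> carrier G"
  using subgroup_Q by (rule subgroup.subset)

lemma y_mem_Q: "y \<in> Q"
  using Q_eq y N_ge_2 by (auto intro: image_eqI[where x = 1])

lemma pow_N_eq_one: "g \<in> Q \<Longrightarrow> g [^] N = \<one>"
  using Q_eq y ord_y by (auto simp flip: nat_pow_pow) (metis mult.commute nat_pow_one nat_pow_pow pow_ord_eq_1)

lemma carrier_quotient: "carrier (G Mod Q) = rcosets Q"
  by (simp add: FactGroup_def)

lemma finite_quotient: "finite (carrier (G Mod Q))"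
  using rcosets_subset_PowG[OF subgroup_Q] finite_carrier carrier_quotient
  by (metis finite_Pow_iff finite_subset)

lemma card_Q: "card Q = N"
  using Q_eq inj_on_pow_lessThan_ord[OF finite_carrier y] ord_y by (simp add: card_image)

lemma order_eq_order_quotient_mult: "order G = order (G Mod Q) * N"
  using lagrange[OF subgroup_Q] card_Q by (simp add: order_def carrier_quotient)

lemma coset_pow: "g \<in> carrier G \<Longrightarrow> (Q #> g) [^]\<^bsub>G Mod Q\<^esub> (j::nat) = Q #> (g [^] j)"
  using normal_Q by (simp add: normal.FactGroup_pow)

lemma coset_pow_eq_one_iff:
  assumes "g \<in> carrier G"
  shows "(Q #> g) [^]\<^bsub>G Mod Q\<^esub> (j::nat) = \<one>\<^bsub>G Mod Q\<^esub> \<longleftrightarrow> g [^] j \<in> Q"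
  using assms rcos_self[OF _ subgroup_Q, of "g [^] j"] subgroup.rcos_const[OF subgroup_Q is_group]
  by (auto simp: coset_pow)

text \<open>The two factors are coprime because \<open>|Q|\<close> and \<open>|G/Q|\<close> are.\<close>
lemma ord_split_by_coset:
  assumes g: "g \<in> carrier G"
  defines "k \<equiv> group.ord (G Mod Q) (Q #> g)"
  shows "g [^] k \<in> Q" and "ord g = k * ord (g [^] k)" and "coprime k (ord (g [^] k))"
proof -
  interpret quotient: group "G Mod Q" by (rule quotient_group)
  have coset: "Q #> g \<in> carrier (G Mod Q)" using g Q_subset by (simp add: carrier_quotient rcosetsI)
  show "g [^] k \<in> Q"
    unfolding k_def using quotient.pow_ord_eq_1[OF coset] coset_pow_eq_one_iff[OF g] by simp
  have "k dvd ord g"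
    unfolding k_def using quotient.pow_eq_id[OF coset] coset_pow_eq_one_iff[OF g]
      subgroup.one_closed[OF subgroup_Q] g by simp
  moreover have "k \<ge> 1" unfolding k_def by (rule quotient.ord_ge_1[OF finite_quotient coset])
  ultimately show ord_g: "ord g = k * ord (g [^] k)" using ord_pow[OF g] by simp
  have "k dvd order (G Mod Q)" unfolding k_def by (rule quotient.ord_dvd_group_order[OF coset])
  moreover have "ord (g [^] k) dvd N"
    using pow_N_eq_one[OF \<open>g [^] k \<in> Q\<close>] g by (simp add: pow_eq_id)
  ultimately show "coprime k (ord (g [^] k))"
    using coprime_index by (meson coprime_commute coprime_divisors)
qed

lemma coset_has_root_of_unity_representative:
  assumes C: "C \<in> carrier (G Mod Q)"
  obtains u where "u \<in> carrier G" "Q #> u = C" "u [^] group.ord (G Mod Q) C = \<one>"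
proof -
  interpret quotient: group "G Mod Q" by (rule quotient_group)
  define k where "k = quotient.ord C"
  obtain g where g: "g \<in> carrier G" and C_eq: "C = Q #> g"
    using C by (auto simp: carrier_quotient RCOSETS_def)
  have "k dvd order (G Mod Q)" unfolding k_def by (rule quotient.ord_dvd_group_order[OF C])
  then have "coprime N k" using coprime_index by (meson coprime_divisors dvd_refl)
  then obtain b where b: "[N * b = 1] (mod k)" using cong_solve_coprime_nat by auto
  define u where "u = g [^] (N * b)"
  have "g [^] k \<in> Q" using ord_split_by_coset(1)[OF g] C_eq by (simp add: k_def)
  have "u [^] k = ((g [^] k) [^] N) [^] b" using g by (simp add: u_def nat_pow_pow mult_ac)
  also have "\<dots> = \<one>" using pow_N_eq_one[OF \<open>g [^] k \<in> Q\<close>] by simp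
  finally have "u [^] k = \<one>" .
  have "Q #> u = C [^]\<^bsub>G Mod Q\<^esub> (N * b)" using coset_pow[OF g] C_eq by (simp add: u_def)
  also have "\<dots> = C [^]\<^bsub>G Mod Q\<^esub> (1::nat)"
    using quotient.pow_mod_ord[OF C, of "N * b"] quotient.pow_mod_ord[OF C, of 1] b
    by (simp add: cong_def k_def)
  also have "\<dots> = C" using quotient.l_one[OF C] by simp
  finally have "Q #> u = C" .
  moreover have "u \<in> carrier G" using g by (simp add: u_def)
  ultimately show ?thesis using that \<open>u [^] k = \<one>\<close> by (simp add: k_def)
qed

lemma coset_eq_image: "u \<in> carrier G \<Longrightarrow> Q #> u = (\<lambda>i. y [^] i \<otimes> u) ` {..<N}"
  by (auto simp: r_coset_def Q_eq)

lemma inj_on_coset_param: "u \<in> carrier G \<Longrightarrow> inj_on (\<lambda>i. y [^] i \<otimes> u) {..<N}"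
  using inj_on_pow_lessThan_ord[OF finite_carrier y] ord_y y
  by (auto simp: inj_on_def)

lemma conj_y_eq_pow:
  assumes "u \<in> carrier G"
  obtains c :: nat where "u \<otimes> y = y [^] c \<otimes> u"
proof -
  have "u \<otimes> y \<otimes> inv u \<in> Q" using normal.inv_op_closed2[OF normal_Q assms y_mem_Q] .
  then obtain c :: nat where c: "u \<otimes> y \<otimes> inv u = y [^] c" using Q_eq by auto
  have "u \<otimes> y = (u \<otimes> y \<otimes> inv u) \<otimes> u" using assms y by (simp add: m_assoc)
  then show ?thesis using that c by auto
qed

context
  fixes u :: 'a and c :: nat
  assumes u: "u \<in> carrier G" and conj: "u \<otimes> y = y [^] c \<otimes> u"
begin

lemma pow_mult_y_pow:
  "u [^] (j::nat) \<otimes> y [^] (i::nat) = y [^] (i * c ^ j) \<otimes> u [^] j"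
proof (induction j arbitrary: i)
  case 0 then show ?case using u y by simp
next
  case (Suc j)
  have u_y_pow: "u \<otimes> y [^] (i::nat) = y [^] (i * c) \<otimes> u" for i
  proof (induction i)
    case (Suc i)
    have "u \<otimes> y [^] Suc i = y [^] (i * c) \<otimes> (u \<otimes> y)" using Suc u y by (simp flip: m_assoc)
    also have "\<dots> = y [^] (i * c) \<otimes> y [^] c \<otimes> u" using conj u y by (simp add: m_assoc)
    also have "\<dots> = y [^] (Suc i * c) \<otimes> u" using y by (simp add: nat_pow_mult add.commute)
    finally show ?case .
  qed (use u in simp)
  have "u [^] Suc j \<otimes> y [^] i = u [^] j \<otimes> (u \<otimes> y [^] i)" using u y by (simp add: m_assoc)
  also have "\<dots> = y [^] (i * c * c ^ j) \<otimes> u [^] Suc j"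
    using Suc u y by (simp add: u_y_pow flip: m_assoc)
  finally show ?case by (simp add: mult.assoc)
qed

lemma coset_elem_pow:
  "(y [^] (i::nat) \<otimes> u) [^] (j::nat) = y [^] (i * (\<Sum>l<j. c ^ l)) \<otimes> u [^] j"
proof (induction j)
  case (Suc j)
  have "(y [^] i \<otimes> u) [^] Suc j = y [^] (i * (\<Sum>l<j. c ^ l)) \<otimes> (u [^] j \<otimes> y [^] i) \<otimes> u"
    using Suc u y by (simp add: m_assoc)
  also have "\<dots> = y [^] (i * (\<Sum>l<Suc j. c ^ l)) \<otimes> u [^] Suc j"
    using u y by (simp add: pow_mult_y_pow m_assoc nat_pow_mult distrib_left flip: m_assoc)
  finally show ?case .
qed (use u y in simp)

text \<open>If \<open>u\<close> acts on \<open>Q\<close> as \<open>y \<mapsto> y\<^sup>c\<close> with \<open>u\<^sup>k = 1\<close>, then \<open>c\<^sup>k \<equiv> 1 (mod N)\<close>, i.e.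
  \<open>N\<close> divides \<open>(c - 1)(1 + c + \<dots> + c\<^sup>k\<^sup>-\<^sup>1)\<close>; coprimality of the second factor forces \<open>c \<equiv> 1\<close>.\<close>
lemma commute_if_coprime_geometric_sum:
  assumes u_pow: "u [^] k = \<one>" and coprime: "coprime (\<Sum>l<k. c ^ l) N"
  shows "u \<otimes> y = y \<otimes> u"
proof -
  have "y [^] (c ^ k) = y [^] (1::nat)" using pow_mult_y_pow[of k 1] u_pow u y by simp
  then have "[c ^ k = 1] (mod N)"
    using pow_eq_pow_iff_mod_ord[OF finite_carrier y, of "c ^ k" 1] ord_y by (simp add: cong_def)
  then have "int N dvd int c ^ k - 1" by (simp add: cong_iff_dvd_diff flip: cong_int_iff)
  also have "int c ^ k - 1 = (int c - 1) * int (\<Sum>l<k. c ^ l)"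
    by (simp add: power_diff_1_eq)
  finally have "int N dvd int c - 1"
    using coprime by (metis coprime_commute coprime_dvd_mult_left_iff coprime_int_iff)
  then have "[c = 1] (mod N)" by (simp add: cong_iff_dvd_diff flip: cong_int_iff)
  then have "y [^] c = y [^] (1::nat)"
    using pow_eq_pow_iff_mod_ord[OF finite_carrier y, of c 1] ord_y by (simp add: cong_def)
  then show ?thesis using conj y by simp
qed

end

lemma sum_ord_weight_powers_y: "(\<Sum>i<N. ord_weight r s (ord (y [^] i))) = R_cyclic r s N"
proof -
  have "N > 0" using N_ge_2 by simp
  have "(\<Sum>i<N. ord_weight r s (ord (y [^] i))) = (\<Sum>i<N. ord_weight r s (N div gcd N i))"
    using ord_y \<open>N > 0\<close> y by (intro sum.cong refl) (simp add: ord_pow_gen)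
  also have "\<dots> = R_cyclic r s N"
    unfolding R_cyclic_def by (rule sum_ord_div_gcd_eq_sum_totient[OF \<open>N > 0\<close>])
  finally show ?thesis .
qed

definition coset_weight :: "real \<Rightarrow> real \<Rightarrow> 'a set \<Rightarrow> real" where
  "coset_weight r s C = (\<Sum>g\<in>C. ord_weight r s (ord (g [^] group.ord (G Mod Q) C)))"

lemma sum_ord_weight_coset:
  assumes C: "C \<in> carrier (G Mod Q)"
  shows "(\<Sum>g\<in>C. ord_weight r s (ord g)) = ord_weight r s (group.ord (G Mod Q) C) * coset_weight r s C"
proof -
  have "ord_weight r s (ord g) = ord_weight r s (group.ord (G Mod Q) C)
      * ord_weight r s (ord (g [^] group.ord (G Mod Q) C))" if "g \<in> C" for g
  proof -
    obtain h where h: "h \<in> carrier G" and C_eq: "C = Q #> h"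
      using C by (auto simp: carrier_quotient RCOSETS_def)
    have g: "g \<in> carrier G" using that C_eq h Q_subset r_coset_subset_G by blast
    have "C = Q #> g" using repr_independence[OF _ h subgroup_Q] that C_eq by simp
    then show ?thesis using ord_split_by_coset[OF g] by (simp add: ord_weight_mult)
  qed
  then show ?thesis by (simp add: coset_weight_def sum_distrib_left)
qed

lemma R_sum_eq_sum_cosets:
  "R_sum G r s = (\<Sum>C\<in>carrier (G Mod Q). ord_weight r s (group.ord (G Mod Q) C) * coset_weight r s C)"
proof -
  have "R_sum G r s = (\<Sum>g\<in>\<Union>(rcosets Q). ord_weight r s (ord g))"
    using rcosets_part_G[OF subgroup_Q] by (simp add: R_sum_eq_sum_ord_weight)
  also have "\<dots> = (\<Sum>C\<in>rcosets Q. \<Sum>g\<in>C. ord_weight r s (ord g))"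
    using cosets_finite[OF _ Q_subset finite_carrier] rcos_disjoint[OF subgroup_Q]
    by (subst sum.Union_disjoint) (auto simp: pairwise_def disjnt_def)
  also have "\<dots> = (\<Sum>C\<in>carrier (G Mod Q). ord_weight r s (group.ord (G Mod Q) C) * coset_weight r s C)"
    using sum_ord_weight_coset by (simp add: carrier_quotient)
  finally show ?thesis .
qed

text \<open>Writing the coset as \<open>{y\<^sup>i u | i < N}\<close> with \<open>u\<^sup>k = 1\<close> and \<open>u y u\<^sup>-\<^sup>1 = y\<^sup>c\<close>, the \<open>k\<close>-th
  powers of its elements are the powers \<open>(y\<^sup>i)\<^sup>S\<close> with \<open>S = 1 + c + \<dots> + c\<^sup>k\<^sup>-\<^sup>1\<close>.\<close>
lemma coset_weight_eq_sum_powers: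
  assumes u: "u \<in> carrier G" and u_pow: "u [^] group.ord (G Mod Q) (Q #> u) = \<one>"
    and conj: "u \<otimes> y = y [^] (c::nat) \<otimes> u"
  shows "coset_weight r s (Q #> u)
    = (\<Sum>i<N. ord_weight r s (ord ((y [^] i) [^] (\<Sum>l<group.ord (G Mod Q) (Q #> u). c ^ l))))"
  using coset_eq_image[OF u] inj_on_coset_param[OF u] coset_elem_pow[OF u conj] u_pow y
  by (simp add: coset_weight_def sum.reindex nat_pow_pow)

context
  fixes r s :: real
  assumes s_ge_1: "1 \<le> s" and r_le: "r \<le> s - 1"
begin

lemma sum_ord_weight_pow_powers_y_le:
  "(\<Sum>i<N. ord_weight r s (ord ((y [^] i) [^] (S::nat)))) \<le> R_cyclic r s N"
  unfolding sum_ord_weight_powers_y[symmetric]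
  using s_ge_1 r_le finite_carrier y by (intro sum_mono ord_weight_ord_pow_le) auto

lemma sum_ord_weight_pow_powers_y_less:
  assumes "\<not> coprime S N"
  shows "(\<Sum>i<N. ord_weight r s (ord ((y [^] i) [^] (S::nat)))) < R_cyclic r s N"
  unfolding sum_ord_weight_powers_y[symmetric]
proof (rule sum_strict_mono_ex1)
  show "\<forall>i\<in>{..<N}. ord_weight r s (ord ((y [^] i) [^] S)) \<le> ord_weight r s (ord (y [^] i))"
    using s_ge_1 r_le finite_carrier y by (auto intro: ord_weight_ord_pow_le)
  have "ord (y [^] S) \<noteq> N" using assms pow_ord_eq_ord_iff[OF finite_carrier y] ord_y by simp
  moreover have "ord (y [^] S) dvd N" using ord_pow_dvd_ord[OF y] ord_y by simp
  ultimately have "ord_weight r s (ord (y [^] S)) < ord_weight r s N"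
    using ord_weight_dvd_strict_mono[OF s_ge_1 r_le] N_ge_2 by simp
  then show "\<exists>i\<in>{..<N}. ord_weight r s (ord ((y [^] i) [^] S)) < ord_weight r s (ord (y [^] i))"
    using N_ge_2 y ord_y by (intro bexI[of _ 1]) auto
qed simp

lemma coset_weight_le:
  assumes "C \<in> carrier (G Mod Q)"
  shows "coset_weight r s C \<le> R_cyclic r s N"
proof -
  obtain u where u: "u \<in> carrier G" "Q #> u = C" "u [^] group.ord (G Mod Q) C = \<one>"
    using coset_has_root_of_unity_representative[OF assms] .
  obtain c :: nat where "u \<otimes> y = y [^] c \<otimes> u" using conj_y_eq_pow[OF u(1)] .
  then show ?thesis
    using coset_weight_eq_sum_powers[OF u(1)] u sum_ord_weight_pow_powers_y_le by simp
qed

lemma commuting_representative_if_coset_weight_eq: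
  assumes C: "C \<in> carrier (G Mod Q)" and eq: "coset_weight r s C = R_cyclic r s N"
  obtains u where "u \<in> carrier G" "Q #> u = C" "u [^] group.ord (G Mod Q) C = \<one>" "u \<otimes> y = y \<otimes> u"
proof -
  obtain u where u: "u \<in> carrier G" "Q #> u = C" "u [^] group.ord (G Mod Q) C = \<one>"
    using coset_has_root_of_unity_representative[OF C] .
  obtain c :: nat where conj: "u \<otimes> y = y [^] c \<otimes> u" using conj_y_eq_pow[OF u(1)] .
  have "coprime (\<Sum>l<group.ord (G Mod Q) C. c ^ l) N"
    using coset_weight_eq_sum_powers[OF u(1) _ conj] u eq sum_ord_weight_pow_powers_y_less
    by fastforce
  then have "u \<otimes> y = y \<otimes> u" using commute_if_coprime_geometric_sum[OF u(1) conj u(3)] by simp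
  then show ?thesis using that u by blast
qed

lemma R_sum_le_mult_quotient: "R_sum G r s \<le> R_cyclic r s N * R_sum (G Mod Q) r s"
proof -
  interpret quotient: group "G Mod Q" by (rule quotient_group)
  have "R_sum G r s \<le> (\<Sum>C\<in>carrier (G Mod Q). ord_weight r s (quotient.ord C) * R_cyclic r s N)"
    unfolding R_sum_eq_sum_cosets using coset_weight_le by (intro sum_mono mult_left_mono) auto
  then show ?thesis by (simp add: R_sum_eq_sum_ord_weight sum_distrib_left mult.commute)
qed

lemma R_sum_less_mult_quotient:
  assumes C: "C \<in> carrier (G Mod Q)" and less: "coset_weight r s C < R_cyclic r s N"
  shows "R_sum G r s < R_cyclic r s N * R_sum (G Mod Q) r s"
proof -
  interpret quotient: group "G Mod Q" by (rule quotient_group)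
  have pos: "0 < ord_weight r s (quotient.ord D)" if "D \<in> carrier (G Mod Q)" for D
    using quotient.ord_ge_1[OF finite_quotient that] by (simp add: ord_weight_pos)
  have "R_sum G r s < (\<Sum>D\<in>carrier (G Mod Q). ord_weight r s (quotient.ord D) * R_cyclic r s N)"
    unfolding R_sum_eq_sum_cosets
  proof (rule sum_strict_mono_ex1[OF finite_quotient])
    show "\<forall>D\<in>carrier (G Mod Q). ord_weight r s (quotient.ord D) * coset_weight r s D
        \<le> ord_weight r s (quotient.ord D) * R_cyclic r s N"
      using coset_weight_le by (auto intro: mult_left_mono)
    show "\<exists>D\<in>carrier (G Mod Q). ord_weight r s (quotient.ord D) * coset_weight r s D
        < ord_weight r s (quotient.ord D) * R_cyclic r s N"
      using C less pos[OF C] by (intro bexI[OF _ C] mult_strict_left_mono)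
  qed
  then show ?thesis by (simp add: R_sum_eq_sum_ord_weight sum_distrib_left mult.commute)
qed

lemma cyclic_if_R_sum_eq_mult_quotient:
  assumes eq: "R_sum G r s = R_cyclic r s N * R_sum (G Mod Q) r s" and cyclic: "cyclic_group (G Mod Q)"
  shows "cyclic_group G"
proof -
  interpret quotient: group "G Mod Q" by (rule quotient_group)
  obtain C where C: "C \<in> carrier (G Mod Q)" and "subgroup_generated (G Mod Q) {C} = G Mod Q"
    using cyclic unfolding cyclic_group_def by blast
  then have ord_C: "quotient.ord C = order (G Mod Q)" using quotient.cyclic_order_is_ord by simp
  have "coset_weight r s C = R_cyclic r s N"
    using coset_weight_le[OF C] R_sum_less_mult_quotient[OF C] eq by fastforce
  then obtain u where u: "u \<in> carrier G" and C_eq: "Q #> u = C"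
    and u_pow: "u [^] quotient.ord C = \<one>" and comm: "u \<otimes> y = y \<otimes> u"
    using commuting_representative_if_coset_weight_eq[OF C] by blast
  have "ord u = order (G Mod Q)" using ord_split_by_coset(2)[OF u] C_eq u_pow ord_C by simp
  then have "ord (u \<otimes> y) = order G"
    using ord_mult_of_commuting_coprime[OF u y comm] coprime_index ord_y
    by (simp add: order_eq_order_quotient_mult coprime_commute)
  then show ?thesis using cyclic_group_if_ord_eq_order[OF finite_carrier, of "u \<otimes> y"] u y by simp
qed

text \<open>The inductive step: \<open>R(G) \<le> R(C\<^sub>N) R(G/Q) \<le> R(C\<^sub>N) R(C\<^sub>m) = R(C\<^sub>N\<^sub>m)\<close>, with equality
  throughout only if \<open>G/Q\<close> is cyclic and then \<open>G\<close> is.\<close>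
lemma R_sum_le_R_cyclic_if_quotient:
  assumes quotient: "R_sum (G Mod Q) r s \<le> R_cyclic r s (order (G Mod Q))
    \<and> (R_sum (G Mod Q) r s = R_cyclic r s (order (G Mod Q)) \<longleftrightarrow> cyclic_group (G Mod Q))"
  shows "R_sum G r s \<le> R_cyclic r s (order G)
    \<and> (R_sum G r s = R_cyclic r s (order G) \<longleftrightarrow> cyclic_group G)"
proof -
  have R_cyclic_order: "R_cyclic r s (order G) = R_cyclic r s N * R_cyclic r s (order (G Mod Q))"
    using R_cyclic_mult[OF coprime_index] by (simp add: order_eq_order_quotient_mult mult.commute)
  have "1 \<le> R_cyclic r s N" using N_ge_2 by (intro R_cyclic_ge_1) simp
  have le: "R_sum G r s \<le> R_cyclic r s N * R_sum (G Mod Q) r s"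
    by (rule R_sum_le_mult_quotient)
  also have "\<dots> \<le> R_cyclic r s (order G)"
    unfolding R_cyclic_order using quotient \<open>1 \<le> R_cyclic r s N\<close> by (intro mult_left_mono) auto
  finally have "R_sum G r s \<le> R_cyclic r s (order G)" .
  moreover have "cyclic_group G" if "R_sum G r s = R_cyclic r s (order G)"
  proof -
    have "R_cyclic r s N * R_cyclic r s (order (G Mod Q)) \<le> R_cyclic r s N * R_sum (G Mod Q) r s"
      using le that unfolding R_cyclic_order by simp
    then have "R_sum (G Mod Q) r s = R_cyclic r s (order (G Mod Q))"
      using quotient \<open>1 \<le> R_cyclic r s N\<close> by simp
    then show ?thesis
      using cyclic_if_R_sum_eq_mult_quotient quotient le that
      unfolding R_cyclic_order by simp
  qed
  ultimately show ?thesis using R_sum_cyclic[OF finite_carrier] by blast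
qed

end

end

section \<open>Induction on the group order\<close>

lemma prime_power_dvd_if_cofactor_less:
  fixes q d n :: nat
  assumes q: "prime q" and "d dvd n" "n > 0" "n < q * d"
  shows "q ^ multiplicity q n dvd d"
proof -
  obtain t where n: "n = d * t" using assms(2) by (rule dvdE)
  then have "0 < t" "t < q" using assms(3,4) by (simp_all add: mult.commute[of q])
  then have "\<not> q dvd t" by (auto dest: dvd_imp_le)
  then have "coprime (q ^ multiplicity q n) t"
    using prime_imp_coprime[OF q] by (simp add: coprime_power_left_iff)
  moreover have "q ^ multiplicity q n dvd d * t" using multiplicity_dvd n by metis
  ultimately show ?thesis by (simp add: coprime_dvd_mult_left_iff)
qed

lemma (in group) cyclic_normal_coprime_if_large_element:
  assumes fin: "finite (carrier G)" and "order G > 1" and x: "x \<in> carrier G"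
    and large: "order G < Max (prime_factors (order G)) * ord x"
  obtains Q y N where "cyclic_normal_coprime G Q y N"
proof -
  define n where "n = order G"
  define q where "q = Max (prime_factors n)"
  have "prime_factors n \<noteq> {}" using \<open>order G > 1\<close> by (simp add: n_def prime_factorization_empty_iff)
  then have "q \<in> prime_factors n" unfolding q_def by (intro Max_in) auto
  then have q: "prime q" and "multiplicity q n > 0" by (auto simp: prime_factors_multiplicity)
  define N where "N = q ^ multiplicity q n"
  have "q ^ 1 \<le> N"
    unfolding N_def using \<open>multiplicity q n > 0\<close> prime_gt_0_nat[OF q] by (intro power_increasing) auto
  then have "N \<ge> 2" using prime_ge_2_nat[OF q] by simp
  have "N dvd ord x"
    using prime_power_dvd_if_cofactor_less[OF q ord_dvd_group_order[OF x]] large \<open>order G > 1\<close>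
    by (simp add: N_def n_def q_def)
  have "\<not> q dvd n div N"
    unfolding N_def using \<open>order G > 1\<close> q by (intro multiplicity_decompose) (auto simp: n_def)
  then have coprime: "coprime N (n div N)"
    using prime_imp_coprime[OF q] by (simp add: N_def coprime_power_left_iff)
  have torsion_in_powers: "g \<in> range (\<lambda>l::nat. x [^] l)" if "g \<in> carrier G" "g [^] N = \<one>" for g
    using prime_power_torsion_in_powers[OF fin q x _ that(1) that(2)[unfolded N_def]] large
    by (simp add: n_def q_def)
  define y where "y = x [^] (ord x div N)"
  define Q where "Q = {g \<in> carrier G. g [^] N = \<one>}"
  have y: "y \<in> carrier G" using x by (simp add: y_def)
  have "N > 0" using \<open>N \<ge> 2\<close> by simp
  note root = torsion_eq_powers_of_root[OF fin x \<open>N dvd ord x\<close> \<open>N > 0\<close> torsion_in_powers]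
  have ord_y: "ord y = N" unfolding y_def by (rule root(1))
  have Q_eq: "Q = (\<lambda>i. y [^] i) ` {..<N}" unfolding Q_def y_def by (rule root(2))
  have normal: "Q \<lhd> G"
    unfolding Q_def by (rule normal_torsion_if_powers[OF y ord_y \<open>N > 0\<close> Q_eq[unfolded Q_def]])
  have "card Q = N"
    using Q_eq inj_on_pow_lessThan_ord[OF fin y] ord_y by (simp add: card_image)
  moreover have "card (rcosets Q) * card Q = n"
    unfolding n_def by (rule lagrange[OF normal_imp_subgroup[OF normal]])
  ultimately have "order (G Mod Q) * N = n" by (simp add: order_def FactGroup_def)
  then have "order (G Mod Q) = n div N" using \<open>N > 0\<close> by (metis div_mult_self_is_m)
  have "cyclic_normal_coprime G Q y N"
    using fin normal y ord_y Q_eq coprime \<open>N \<ge> 2\<close> \<open>order (G Mod Q) = n div N\<close>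
    by (intro cyclic_normal_coprime.intro cyclic_normal_coprime_axioms.intro is_group) simp_all
  then show ?thesis by (rule that)
qed

lemma (in group) R_sum_less_R_cyclic_if_small_elements:
  assumes s_ge_1: "1 \<le> s" and r_le: "r \<le> s - 1" and fin: "finite (carrier G)" and "order G > 1"
    and small: "\<And>x. x \<in> carrier G \<Longrightarrow> Max (prime_factors (order G)) * ord x \<le> order G"
  shows "R_sum G r s < R_cyclic r s (order G)"
proof -
  define n where "n = order G"
  define q where "q = Max (prime_factors n)"
  have "n > 0" using \<open>order G > 1\<close> by (simp add: n_def)
  have "prime_factors n \<noteq> {}" using \<open>order G > 1\<close> by (simp add: n_def prime_factorization_empty_iff)
  then have "q \<in> prime_factors n" unfolding q_def by (intro Max_in) auto
  then have "q > 0" using prime_gt_0_nat by auto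
  have each: "real q * ord_weight r s (ord x) \<le> ord_weight r s n" if x: "x \<in> carrier G" for x
  proof -
    have "real n * (real q * ord_weight r s (ord x)) = real q * (real n * ord_weight r s (ord x))"
      by simp
    also have "\<dots> \<le> real q * (real (ord x) * ord_weight r s n)"
      using ord_dvd_group_order[OF x] \<open>n > 0\<close>
      by (intro mult_left_mono ord_weight_div_mono[OF s_ge_1 r_le]) (auto simp: n_def)
    also have "\<dots> \<le> real n * ord_weight r s n"
      using small[OF x] ord_weight_pos[OF \<open>n > 0\<close>, of r s] mult_right_mono[of "real q * real (ord x)"]
      by (simp add: n_def q_def flip: of_nat_mult)
    finally show ?thesis using \<open>n > 0\<close> by simp
  qed
  have "real q * R_sum G r s \<le> (\<Sum>x\<in>carrier G. ord_weight r s n)"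
    unfolding R_sum_eq_sum_ord_weight sum_distrib_left using each by (intro sum_mono) auto
  also have "\<dots> = real n * ord_weight r s n" by (simp add: n_def order_def)
  also have "\<dots> \<le> real q * (real (totient n) * ord_weight r s n)"
    using le_Max_prime_factor_mult_totient[of n] \<open>order G > 1\<close> ord_weight_pos[OF \<open>n > 0\<close>, of r s]
    by (simp add: n_def q_def mult_right_mono flip: mult.assoc)
  finally have "R_sum G r s \<le> real (totient n) * ord_weight r s n" using \<open>q > 0\<close> by simp
  also have "\<dots> < R_cyclic r s n"
    using R_cyclic_ge_totient_ord_weight[of n r s] \<open>order G > 1\<close> by (simp add: n_def)
  finally show ?thesis by (simp add: n_def)
qed

text \<open>Stated for \<open>'a monoid\<close> so that the quotient \<open>G/Q\<close>, flattened back onto carrier type \<open>'a\<close>,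
  falls under the induction hypothesis.\<close>
theorem R_sum_le_R_cyclic:
  fixes G :: "'a monoid"
  assumes "1 \<le> s" "r \<le> s - 1" and "group G" "finite (carrier G)"
  shows "R_sum G r s \<le> R_cyclic r s (order G)
    \<and> (R_sum G r s = R_cyclic r s (order G) \<longleftrightarrow> cyclic_group G)"
  using assms(3,4)
proof (induction "order G" arbitrary: G rule: less_induct)
  case less
  interpret group G by fact
  show ?case
  proof (cases "cyclic_group G")
    case True
    then show ?thesis using R_sum_cyclic[OF less.prems(2)] by simp
  next
    case not_cyclic: False
    have "order G > 1"
      using cyclic_group_if_ord_eq_order[OF less.prems(2) one_closed] not_cyclic
        order_gt_0_iff_finite less.prems(2) by (cases "order G = 1") auto
    show ?thesis
    proof (cases "\<exists>x\<in>carrier G. order G < Max (prime_factors (order G)) * ord x")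
      case True
      then obtain Q y N where "cyclic_normal_coprime G Q y N"
        using cyclic_normal_coprime_if_large_element[OF less.prems(2) \<open>order G > 1\<close>] by blast
      then interpret cyclic_normal_coprime G Q y N .
      obtain F :: "'a monoid" where F: "group F" "G Mod Q \<cong> F"
        using normal.flatten_set_group_mod[OF normal_Q] normal.flatten_set_group_mod_iso[OF normal_Q]
        by (blast intro: is_isoI)
      note F_eq = is_iso_invariants[OF quotient_group F]
      have "order (G Mod Q) < order G"
        using order_eq_order_quotient_mult N_ge_2 \<open>order G > 1\<close> by (cases "order (G Mod Q) = 0") auto
      then have "R_sum F r s \<le> R_cyclic r s (order F)
          \<and> (R_sum F r s = R_cyclic r s (order F) \<longleftrightarrow> cyclic_group F)"
        using less.hyps[of F] F F_eq finite_quotient by simp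
      then show ?thesis using R_sum_le_R_cyclic_if_quotient[OF assms(1,2)] F_eq by simp
    next
      case False
      then show ?thesis
        using R_sum_less_R_cyclic_if_small_elements[OF assms(1,2) less.prems(2) \<open>order G > 1\<close>]
          not_cyclic by (auto simp: not_less)
    qed
  qed
qed

lemma (in group) iso_monoid_part: "(\<lambda>x. x) \<in> iso G \<lparr>carrier = carrier G, mult = mult G, one = one G\<rparr>"
  by (simp add: iso_def hom_def bij_betw_def)

theorem mainTheorem6:
  fixes G :: "('a, 'b) monoid_scheme" and r s :: real
  assumes "group G" and "finite (carrier G)"
    and "s \<ge> 1" and "r \<le> s - 1"
  shows "T_diff G r s \<le> 0 \<and> (T_diff G r s = 0 \<longleftrightarrow> cyclic_group G)"
proof -
  interpret group G by fact
  let ?G' = "\<lparr>carrier = carrier G, mult = mult G, one = one G\<rparr>"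
  have "G \<cong> ?G'" using iso_monoid_part by (rule is_isoI)
  have "monoid ?G'" using is_monoid unfolding monoid_def by simp
  then have "group ?G'" by (rule iso_imp_group[OF \<open>G \<cong> ?G'\<close>])
  note G'_eq = is_iso_invariants[OF is_group \<open>group ?G'\<close> \<open>G \<cong> ?G'\<close>]
  have "R_sum G r s \<le> R_cyclic r s (order G)
      \<and> (R_sum G r s = R_cyclic r s (order G) \<longleftrightarrow> cyclic_group G)"
    using R_sum_le_R_cyclic[OF assms(3,4) \<open>group ?G'\<close>] G'_eq assms(2) by simp
  moreover have "T_diff G r s = R_sum G r s - R_cyclic r s (order G)"
    using R_sum_integer_mod_group assms(2) by (simp add: T_diff_def order_gt_0_iff_finite)
  ultimately show ?thesis by auto
qed

end
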